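(* For every positive integer $m$ and every integer $n\ge 0$, \[ \sum_{i=0}^{n} q^{-2i}q^{m(i^2+2i)}\frac{(1-q^{i+1})^3(1+q^{i+1})}{(1-q)(1-q^{n+1})(1-q^{n+2})} =\sum_{0\leq k_m\leq\dots\leq k_1\leq n}q^{-2k_m}q^{\sum_{j=1}^m(k_j^2+2k_j)} \frac{(q)_n^2}{(q)_{k_m}^2(q)_{n-k_1}\prod_{j=1}^{m-1}(q)_{k_j-k_{j+1}}} \cdot\frac{(1-q^{n+1})(1-q^{n+2})}{(1-q^{n-k_m+1})(1-q^{n-k_m+2})} \] as rational functions of $q$ (the empty product for $m=1$ equals $1$).
   Context: $(q)_k=\prod_{l=1}^{k}(1-q^l)$ for $k\ge0$, $(q)_0=1$. *)

theory Defs
  imports "HOL-Computational_Algebra.Polynomial" "HOL-Computational_Algebra.Fraction_Field"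
begin

type_synonym ratfun = "rat poly fract"

definition qv :: ratfun where
  "qv = Fract [:0, 1:] 1"

definition qpoch :: "'a::comm_ring_1 \<Rightarrow> nat \<Rightarrow> 'a" where
  "qpoch q k = (\<Prod>l=1..k. (1 - q ^ l))"

definition chains :: "nat \<Rightarrow> nat \<Rightarrow> (nat \<Rightarrow> nat) set" where
  "chains m n = {k. (\<forall>j\<in>{1..m}. k j \<le> n) \<and> (\<forall>j\<in>{1..<m}. k (Suc j) \<le> k j)
                    \<and> (\<forall>j. j \<notin> {1..m} \<longrightarrow> k j = 0)}"

end

theory Submission
  imports Defs
begin

(* The left-hand side is the alpha-side of a Bailey pair relative to a = q^2 transported m times
   along the Bailey chain, and the right-hand side is the m-fold Bailey transform of the beta-side
   written out as a sum over chains n >= k_1 >= ... >= k_m.  The Bailey lemma for a = q^2 (with the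
   parameters rho_1, rho_2 sent to infinity) rests on the finite Durfee-rectangle identity
     sum_j q^(j^2 + c j) / ((q)_j (q)_(M-j) (q)_(c+j)) = 1 / ((q)_M (q)_(c+M)),
   and the seed pair (alpha_N, beta_N) is verified directly.  Both summation identities are proved by
   creative telescoping: multiplying the sum for t+1 by a suitable factor gives the sum for t plus a
   telescoping sum of explicit certificates, so everything reduces to rational-function identities. *)

lemma qpoch_0 [simp]: "qpoch q 0 = 1"
  by (simp add: qpoch_def)

lemma qpoch_Suc: "qpoch q (Suc k) = qpoch q k * (1 - q ^ Suc k)"
  by (simp add: qpoch_def)

lemma qpoch_SucI: "k = Suc l \<Longrightarrow> q ^ k = z \<Longrightarrow> qpoch q k = qpoch q l * (1 - z)"
  by (simp add: qpoch_Suc)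

locale generic_q =
  fixes q :: "'a::field"
  assumes q_nonzero: "q \<noteq> 0" and not_root_of_unity: "\<And>l. 0 < l \<Longrightarrow> q ^ l \<noteq> 1"
begin

lemma one_minus_power_nonzero: "0 < l \<Longrightarrow> 1 - q ^ l \<noteq> 0"
  using not_root_of_unity by auto

lemma one_minus_q_nonzero: "1 - q \<noteq> 0"
  using one_minus_power_nonzero[of 1] by simp

lemma qpoch_nonzero: "qpoch q k \<noteq> 0"
  by (induction k) (simp_all add: qpoch_Suc not_root_of_unity del: power_Suc)

end

section \<open>A finite Durfee rectangle identity\<close>

(* durfee_step below, with x = q^(M-j-1), y = q^j, w = q^c and the common factor B. *)
lemma durfee_step_identity:
  fixes q x y w B :: "'a::field"
  assumes "1 - q*x \<noteq> 0" "1 - q^2*x \<noteq> 0"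
  shows "(1 - q^2*x*y) * (1 - q^2*w*x*y) * (B / ((1 - q*x) * (1 - q^2*x))) - B / (1 - q*x)
       = -(q^2*w*x*y^2 * B) / (1 - q*x) - -(q^2*x*(1 - y)*(1 - w*y) * B) / ((1 - q*x) * (1 - q^2*x))"
  using assms by (simp add: divide_simps) algebra

(* durfee_last below, with y = q^M, w = q^c. *)
lemma durfee_last_identity:
  fixes q y w B :: "'a::field"
  assumes "1 - q \<noteq> 0" "1 - q*y \<noteq> 0" "1 - q*w*y \<noteq> 0"
  shows "(1 - q*y) * (1 - q*w*y) * (B / (1 - q) + q*w*y^2 * B / ((1 - q*y) * (1 - q*w*y))) - B
       = -(-(q*(1 - y)*(1 - w*y) * B) / (1 - q))"
  using assms by (simp add: divide_simps) algebra

context generic_q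
begin

definition durfee_term :: "nat \<Rightarrow> nat \<Rightarrow> nat \<Rightarrow> 'a" where
  "durfee_term c M j = q ^ (j*j + c*j) / (qpoch q j * qpoch q (M - j) * qpoch q (c + j))"

definition durfee_certificate :: "nat \<Rightarrow> nat \<Rightarrow> nat \<Rightarrow> 'a" where
  "durfee_certificate c M j = -(q ^ (M + 1 - j) * q ^ (j*j + c*j) * (1 - q ^ j) * (1 - q ^ (c + j)))
     / (qpoch q j * qpoch q (M + 1 - j) * qpoch q (c + j))"

lemma durfee_certificate_0 [simp]: "durfee_certificate c M 0 = 0"
  by (simp add: durfee_certificate_def)

lemma durfee_step:
  assumes "j < M"
  shows "(1 - q ^ (M+1)) * (1 - q ^ (c+M+1)) * durfee_term c (Suc M) j - durfee_term c M j
       = durfee_certificate c M (Suc j) - durfee_certificate c M j"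
proof -
  obtain d where M: "M = j + Suc d"
    using assms less_imp_Suc_add by auto
  define x y w where "x = q ^ d" and "y = q ^ j" and "w = q ^ c"
  define B where "B = q ^ (j*j + c*j) / (qpoch q j * qpoch q d * qpoch q (c + j))"
  have pow: "q ^ Suc d = q*x" "q ^ Suc (Suc d) = q^2*x" "q ^ j = y" "q ^ Suc j = q*y"
    "q ^ (c + j) = w*y" "q ^ Suc (c + j) = q*w*y"
    "q ^ (Suc j * Suc j + c * Suc j) = q ^ (j*j + c*j) * (q*w*y^2)"
    "q ^ (M + 1) = q^2*x*y" "q ^ (c + M + 1) = q^2*w*x*y"
    by (simp_all add: x_def y_def w_def M power_add power2_eq_square algebra_simps)
  have nz: "1 - q*x \<noteq> 0" "1 - q^2*x \<noteq> 0" "1 - q*y \<noteq> 0" "1 - q*w*y \<noteq> 0"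
    using one_minus_power_nonzero[of "Suc d"] one_minus_power_nonzero[of "Suc (Suc d)"]
      one_minus_power_nonzero[of "Suc j"] one_minus_power_nonzero[of "Suc (c + j)"]
    unfolding pow by auto
  have "durfee_term c (Suc M) j = B / ((1 - q*x) * (1 - q^2*x))"
    by (simp add: durfee_term_def B_def M qpoch_Suc pow mult_ac del: power_Suc)
  moreover have "durfee_term c M j = B / (1 - q*x)"
    by (simp add: durfee_term_def B_def M qpoch_Suc pow mult_ac del: power_Suc)
  moreover have "durfee_certificate c M (Suc j) = -(q^2*w*x*y^2 * B) / (1 - q*x)"
    unfolding durfee_certificate_def pow(7)
    using nz qpoch_nonzero
    by (simp add: B_def M qpoch_Suc pow divide_simps power2_eq_square del: power_Suc)
  moreover have "durfee_certificate c M j = -(q^2*x*(1 - y)*(1 - w*y) * B) / ((1 - q*x) * (1 - q^2*x))"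
    using nz qpoch_nonzero
    by (simp add: durfee_certificate_def B_def M qpoch_Suc pow divide_simps del: power_Suc)
  ultimately show ?thesis
    unfolding pow by (simp only: durfee_step_identity[OF nz(1,2)])
qed

lemma durfee_last:
  "(1 - q ^ (M+1)) * (1 - q ^ (c+M+1)) * (durfee_term c (Suc M) M + durfee_term c (Suc M) (Suc M))
     - durfee_term c M M = - durfee_certificate c M M"
proof -
  define y w where "y = q ^ M" and "w = q ^ c"
  define B where "B = q ^ (M*M + c*M) / (qpoch q M * qpoch q (c + M))"
  have pow: "q ^ M = y" "q ^ Suc M = q*y" "q ^ (c + M) = w*y" "q ^ Suc (c + M) = q*w*y"
    "q ^ (Suc M * Suc M + c * Suc M) = q ^ (M*M + c*M) * (q*w*y^2)"
    "q ^ (M + 1) = q*y" "q ^ (c + M + 1) = q*w*y"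
    by (simp_all add: y_def w_def power_add power2_eq_square algebra_simps)
  have nz: "1 - q \<noteq> 0" "1 - q*y \<noteq> 0" "1 - q*w*y \<noteq> 0"
    using one_minus_q_nonzero one_minus_power_nonzero[of "Suc M"]
      one_minus_power_nonzero[of "Suc (c + M)"]
    unfolding pow by auto
  have "durfee_term c (Suc M) M = B / (1 - q)"
    by (simp add: durfee_term_def B_def Suc_diff_le qpoch_Suc mult_ac)
  moreover have "durfee_term c (Suc M) (Suc M) = q*w*y^2 * B / ((1 - q*y) * (1 - q*w*y))"
    unfolding durfee_term_def pow(5)
    using nz qpoch_nonzero by (simp add: B_def qpoch_Suc pow divide_simps del: power_Suc)
  moreover have "durfee_term c M M = B"
    by (simp add: durfee_term_def B_def)
  moreover have "durfee_certificate c M M = -(q*(1 - y)*(1 - w*y) * B) / (1 - q)"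
    using nz qpoch_nonzero
    by (simp add: durfee_certificate_def B_def Suc_diff_le qpoch_Suc pow divide_simps del: power_Suc)
  ultimately show ?thesis
    unfolding pow by (simp only: durfee_last_identity[OF nz])
qed

lemma durfee_sum: "(\<Sum>j\<le>M. durfee_term c M j) = 1 / (qpoch q M * qpoch q (c + M))"
proof (induction M)
  case 0
  show ?case by (simp add: durfee_term_def)
next
  case (Suc M)
  define D where "D = (1 - q ^ (M+1)) * (1 - q ^ (c+M+1))"
  let ?G = "durfee_certificate c M"
  have "D * (\<Sum>j\<le>Suc M. durfee_term c (Suc M) j)
      = (\<Sum>j<M. D * durfee_term c (Suc M) j)
        + D * (durfee_term c (Suc M) M + durfee_term c (Suc M) (Suc M))"
    by (simp add: lessThan_Suc_atMost[symmetric] sum_distrib_left algebra_simps)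
  also have "(\<Sum>j<M. D * durfee_term c (Suc M) j) = (\<Sum>j<M. durfee_term c M j + (?G (Suc j) - ?G j))"
    by (intro sum.cong refl) (simp add: D_def durfee_step[symmetric])
  also have "\<dots> = (\<Sum>j<M. durfee_term c M j) + ?G M"
    by (simp add: sum.distrib sum_lessThan_telescope)
  also have "D * (durfee_term c (Suc M) M + durfee_term c (Suc M) (Suc M)) = durfee_term c M M - ?G M"
    using durfee_last[of M c] by (simp add: D_def algebra_simps)
  finally have "D * (\<Sum>j\<le>Suc M. durfee_term c (Suc M) j) = (\<Sum>j\<le>M. durfee_term c M j)"
    by (simp add: lessThan_Suc_atMost[symmetric])
  moreover have "D \<noteq> 0"
    by (simp add: D_def not_root_of_unity del: power_Suc)
  ultimately have "(\<Sum>j\<le>Suc M. durfee_term c (Suc M) j) = (\<Sum>j\<le>M. durfee_term c M j) / D"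
    by (simp add: eq_divide_eq mult.commute)
  then show ?case
    using Suc.IH by (simp add: D_def qpoch_Suc mult_ac del: power_Suc)
qed

end

section \<open>The Bailey lemma for a = q^2\<close>

lemma sum_atMost_triangle_swap:
  fixes t :: nat
  shows "(\<Sum>s\<le>t. \<Sum>r\<le>s. f s r) = (\<Sum>r\<le>t. \<Sum>s=r..t. f s r)"
proof -
  have "(\<Sum>s\<le>t. \<Sum>r\<le>s. f s r) = (\<Sum>s\<le>t. \<Sum>r\<in>{r\<in>{..t}. r \<le> s}. f s r)"
    by (intro sum.cong refl arg_cong[where f = "sum _"]) auto
  also have "\<dots> = (\<Sum>r\<le>t. \<Sum>s\<in>{s\<in>{..t}. r \<le> s}. f s r)"
    by (rule sum.swap_restrict) auto
  also have "\<dots> = (\<Sum>r\<le>t. \<Sum>s=r..t. f s r)"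
    by (intro sum.cong refl arg_cong[where f = "sum _"]) auto
  finally show ?thesis .
qed

context generic_q
begin

(* Bailey pairs relative to a = q^2: the usual kernel 1 / ((q)_(t-r) (aq;q)_(t+r)) with
   (q^3;q)_(t+r) replaced by (q)_(t+r+2); the constant factor (1-q)(1-q^2) is absorbed into alpha. *)
definition bailey_kernel :: "nat \<Rightarrow> nat \<Rightarrow> 'a" where
  "bailey_kernel t r = 1 / (qpoch q (t - r) * qpoch q (t + r + 2))"

lemma bailey_kernel_convolution:
  assumes "r \<le> t"
  shows "(\<Sum>s=r..t. q ^ (s^2 + 2*s) / qpoch q (t - s) * bailey_kernel s r)
       = q ^ (r^2 + 2*r) * bailey_kernel t r"
proof -
  define M where "M = t - r"
  have "{r..t} = {0 + r..M + r}"
    using assms by (simp add: M_def)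
  then have "(\<Sum>s=r..t. q ^ (s^2 + 2*s) / qpoch q (t - s) * bailey_kernel s r)
      = (\<Sum>j=0..M. q ^ ((j + r)^2 + 2*(j + r)) / qpoch q (t - (j + r)) * bailey_kernel (j + r) r)"
    by (simp only: sum.shift_bounds_cl_nat_ivl)
  also have "\<dots> = (\<Sum>j\<le>M. q ^ (r^2 + 2*r) * durfee_term (2*r + 2) M j)"
    unfolding atLeast0AtMost
  proof (intro sum.cong refl)
    fix j
    have "t - (j + r) = M - j"
      by (simp add: M_def)
    moreover have "bailey_kernel (j + r) r = 1 / (qpoch q j * qpoch q (2*r + 2 + j))"
      unfolding bailey_kernel_def by (simp add: mult_2 add_ac)
    moreover have "(j + r)^2 + 2*(j + r) = (r^2 + 2*r) + (j*j + (2*r + 2)*j)"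
      by (simp add: power2_eq_square algebra_simps)
    ultimately show "q ^ ((j + r)^2 + 2*(j + r)) / qpoch q (t - (j + r)) * bailey_kernel (j + r) r
        = q ^ (r^2 + 2*r) * durfee_term (2*r + 2) M j"
      by (simp only: durfee_term_def power_add) (simp add: mult_ac)
  qed
  also have "\<dots> = q ^ (r^2 + 2*r) * bailey_kernel t r"
    using assms by (simp add: durfee_sum flip: sum_distrib_left)
      (simp add: bailey_kernel_def M_def algebra_simps)
  finally show ?thesis .
qed

definition bailey_transform :: "(nat \<Rightarrow> 'a) \<Rightarrow> nat \<Rightarrow> 'a" where
  "bailey_transform \<beta> t = (\<Sum>s\<le>t. q ^ (s^2 + 2*s) / qpoch q (t - s) * \<beta> s)"

lemma bailey_lemma:
  assumes pair: "\<And>s. s \<le> t \<Longrightarrow> \<beta> s = (\<Sum>r\<le>s. \<alpha> r * bailey_kernel s r)"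
  shows "bailey_transform \<beta> t = (\<Sum>r\<le>t. q ^ (r^2 + 2*r) * \<alpha> r * bailey_kernel t r)"
proof -
  have "bailey_transform \<beta> t
      = (\<Sum>s\<le>t. \<Sum>r\<le>s. \<alpha> r * (q ^ (s^2 + 2*s) / qpoch q (t - s) * bailey_kernel s r))"
    unfolding bailey_transform_def
    by (intro sum.cong refl) (simp add: pair sum_distrib_left sum_distrib_right sum_divide_distrib mult_ac)
  also have "\<dots> = (\<Sum>r\<le>t. \<alpha> r * (\<Sum>s=r..t. q ^ (s^2 + 2*s) / qpoch q (t - s) * bailey_kernel s r))"
    by (simp add: sum_atMost_triangle_swap sum_distrib_left)
  also have "\<dots> = (\<Sum>r\<le>t. q ^ (r^2 + 2*r) * \<alpha> r * bailey_kernel t r)"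
    by (intro sum.cong refl) (subst bailey_kernel_convolution, auto)
  finally show ?thesis .
qed

lemma bailey_lemma_iterated:
  assumes pair: "\<And>s. s \<le> t \<Longrightarrow> \<beta> s = (\<Sum>r\<le>s. \<alpha> r * bailey_kernel s r)"
  shows "(bailey_transform ^^ m) \<beta> t = (\<Sum>r\<le>t. q ^ (m * (r^2 + 2*r)) * \<alpha> r * bailey_kernel t r)"
  using pair
proof (induction m arbitrary: t)
  case 0
  then show ?case by simp
next
  case (Suc m)
  have "(bailey_transform ^^ Suc m) \<beta> t
      = (\<Sum>r\<le>t. q ^ (r^2 + 2*r) * (q ^ (m * (r^2 + 2*r)) * \<alpha> r) * bailey_kernel t r)"
    unfolding funpow.simps comp_def by (rule bailey_lemma) (use Suc in auto)
  then show ?case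
    by (simp add: power_add mult_ac)
qed

end

section \<open>The seed Bailey pair\<close>

(* seed_step below, with x = q^r, y = q^(t-r-1), u = q^(N-t-1). *)
lemma seed_step_identity:
  fixes q x y u \<Phi> :: "'a::field"
  assumes "1 - q^2*y \<noteq> 0" "1 - q^4*x^2*y \<noteq> 0"
  shows "q^2 * (1 - q^2*x*y)^2 * (1 - q*u) * (\<Phi> * (1 - q^2*x^2) / ((1 - q^2*y) * (1 - q^4*x^2*y)))
       - (1 - q^3*u) * (\<Phi> * (1 - q^2*x^2))
     = -(\<Phi> * (1 - q^2*x)^2 * (1 - q^5*x^2*y*u) / (1 - q^4*x^2*y))
       - -(\<Phi> * q^2 * (1 - x)^2 * (1 - q^3*y*u) / (1 - q^2*y))"
  using assms by (simp add: divide_simps) algebra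

(* seed_last below, with x = q^t, u = q^(N-t-1). *)
lemma seed_last_identity:
  fixes q x u \<Psi> :: "'a::field"
  assumes "1 - q \<noteq> 0" "1 - q^3*x^2 \<noteq> 0" "q \<noteq> 0"
  shows "q^2 * (1 - q*x)^2 * (1 - q*u)
         * (\<Psi> * (1 - q*x)^2 * (1 - q^2*x^2) * (1 - q*u) / ((1 - q) * (1 - q^3*x^2))
            + \<Psi> * (1 - q^2*x)^2 * (1 - q^4*x^2*u) / (q^2 * (1 - q^3*x^2)))
       - (1 - q^3*u) * (\<Psi> * (1 - q*x)^2 * (1 - q^2*x^2) * (1 - q*u))
     = -(-(\<Psi> * q^2 * (1 - x)^2 * (1 - q*x)^2 * (1 - q*u) * (1 - q^2*u) / (1 - q)))"
  using assms by (simp add: divide_simps) algebra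

context generic_q
begin

definition seed_alpha :: "nat \<Rightarrow> nat \<Rightarrow> 'a" where
  "seed_alpha N r = (1 - q ^ (r + 1))^2 * (1 - q ^ (2*r + 2)) * qpoch q (N - r) * qpoch q (N + r + 2)
     / (q ^ (2*r) * (1 - q) * qpoch q (N + 2)^2)"

definition seed_beta :: "nat \<Rightarrow> nat \<Rightarrow> 'a" where
  "seed_beta N t = 1 / (q ^ (2*t) * qpoch q t ^ 2 * (1 - q ^ (N - t + 1)) * (1 - q ^ (N - t + 2)))"

definition seed_certificate :: "nat \<Rightarrow> nat \<Rightarrow> nat \<Rightarrow> 'a" where
  "seed_certificate N t r = -(q^2 * (1 - q ^ r)^2 * (1 - q ^ (r + 1))^2 * qpoch q (N + 1 - r) * qpoch q (N + r + 2)
     / (q ^ (2*r) * (1 - q) * qpoch q (N + 2)^2 * qpoch q (t + 1 - r) * qpoch q (t + r + 2)))"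

lemma seed_certificate_0 [simp]: "seed_certificate N t 0 = 0"
  by (simp add: seed_certificate_def)

lemma seed_step:
  assumes "r < t" "t < N"
  shows "q^2 * (1 - q ^ (t + 1))^2 * (1 - q ^ (N - t)) * (seed_alpha N r * bailey_kernel (Suc t) r)
       - (1 - q ^ (N - t + 2)) * (seed_alpha N r * bailey_kernel t r)
     = seed_certificate N t (Suc r) - seed_certificate N t r"
proof -
  obtain d g where t: "t = Suc (r + d)" and N: "N = Suc (t + g)"
    using less_imp_Suc_add[OF assms(1)] less_imp_Suc_add[OF assms(2)] by blast
  define x y u where "x = q ^ r" and "y = q ^ d" and "u = q ^ g"
  define \<Phi> where "\<Phi> = (1 - q*x)^2 * qpoch q (N - r) * qpoch q (N + r + 2)
     / (q ^ (2*r) * (1 - q) * qpoch q (N + 2)^2 * qpoch q (t - r) * qpoch q (t + r + 2))"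
  have pow: "q ^ r = x" "q ^ (r + 1) = q*x" "q ^ Suc r = q*x" "q ^ (Suc r + 1) = q^2*x"
    "q ^ (2 * Suc r) = q ^ (2*r) * q^2"
    by (simp_all add: x_def power2_eq_square)
  have pow2: "q ^ (2*r + 2) = q^2*x^2" "q ^ (2 * Suc r + 2) = q^4*x^2"
    by (simp_all add: x_def power_add power_even_eq eval_nat_numeral mult_ac)
  have pow3: "q ^ (t + 1) = q^2*x*y" "q ^ (N - t) = q*u" "q ^ (N - t + 2) = q^3*u"
    by (simp_all add: x_def y_def u_def t N power_add eval_nat_numeral)
  have poch: "qpoch q (Suc t - r) = qpoch q (t - r) * (1 - q^2*y)"
    "qpoch q (t + 1 - r) = qpoch q (t - r) * (1 - q^2*y)"
    "qpoch q (N + 1 - r) = qpoch q (N - r) * (1 - q^3*y*u)"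
    by (rule qpoch_SucI; simp add: y_def u_def t N eval_nat_numeral power_add)+
  have poch2: "qpoch q (Suc t + r + 2) = qpoch q (t + r + 2) * (1 - q^4*x^2*y)"
    "qpoch q (t + Suc r + 2) = qpoch q (t + r + 2) * (1 - q^4*x^2*y)"
    "qpoch q (N + Suc r + 2) = qpoch q (N + r + 2) * (1 - q^5*x^2*y*u)"
    by (rule qpoch_SucI; simp add: x_def y_def u_def t N eval_nat_numeral power_add mult_ac)+
  have poch3: "qpoch q (t + 1 - Suc r) = qpoch q (t - r)" "qpoch q (N + 1 - Suc r) = qpoch q (N - r)"
    by simp_all
  have nz: "1 - q^2*y \<noteq> 0" "1 - q^4*x^2*y \<noteq> 0"
    using qpoch_nonzero[of "Suc t - r"] qpoch_nonzero[of "Suc t + r + 2"]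
    unfolding poch(1) poch2(1) by auto
  have "seed_alpha N r * bailey_kernel (Suc t) r = \<Phi> * (1 - q^2*x^2) / ((1 - q^2*y) * (1 - q^4*x^2*y))"
    unfolding seed_alpha_def bailey_kernel_def \<Phi>_def poch(1) poch2(1) pow pow2
    by (simp add: divide_inverse mult_ac)
  moreover have "seed_alpha N r * bailey_kernel t r = \<Phi> * (1 - q^2*x^2)"
    unfolding seed_alpha_def bailey_kernel_def \<Phi>_def pow pow2
    by (simp add: divide_inverse mult_ac)
  moreover have "seed_certificate N t (Suc r) = -(\<Phi> * (1 - q^2*x)^2 * (1 - q^5*x^2*y*u) / (1 - q^4*x^2*y))"
    unfolding seed_certificate_def \<Phi>_def poch2(2,3) poch3 pow
    using q_nonzero by (simp add: divide_inverse mult_ac)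
  moreover have "seed_certificate N t r = -(\<Phi> * q^2 * (1 - x)^2 * (1 - q^3*y*u) / (1 - q^2*y))"
    unfolding seed_certificate_def \<Phi>_def poch(2,3) pow
    by (simp add: divide_inverse mult_ac)
  ultimately show ?thesis
    unfolding pow3 by (simp only: seed_step_identity[OF nz])
qed

lemma seed_last:
  assumes "t < N"
  shows "q^2 * (1 - q ^ (t + 1))^2 * (1 - q ^ (N - t))
         * (seed_alpha N t * bailey_kernel (Suc t) t + seed_alpha N (Suc t) * bailey_kernel (Suc t) (Suc t))
       - (1 - q ^ (N - t + 2)) * (seed_alpha N t * bailey_kernel t t)
     = - seed_certificate N t t"
proof -
  obtain g where N: "N = Suc (t + g)"
    using less_imp_Suc_add[OF assms] by blast
  define x u where "x = q ^ t" and "u = q ^ g"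
  define \<Psi> where "\<Psi> = qpoch q (N - Suc t) * qpoch q (N + t + 2)
     / (q ^ (2*t) * (1 - q) * qpoch q (N + 2)^2 * qpoch q (t + t + 2))"
  have pow: "q ^ t = x" "q ^ (t + 1) = q*x" "q ^ (Suc t + 1) = q^2*x"
    "q ^ (2 * Suc t) = q ^ (2*t) * q^2" "q ^ (N - t) = q*u" "q ^ (N - t + 2) = q^3*u"
    by (simp_all add: x_def u_def N power2_eq_square eval_nat_numeral)
  have pow2: "q ^ (2*t + 2) = q^2*x^2" "q ^ (2 * Suc t + 2) = q^4*x^2"
    by (simp_all add: x_def power_add power_even_eq eval_nat_numeral mult_ac)
  have poch: "qpoch q (N - t) = qpoch q (N - Suc t) * (1 - q*u)"
    "qpoch q (N + 1 - t) = qpoch q (N - t) * (1 - q^2*u)"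
    "qpoch q (N + Suc t + 2) = qpoch q (N + t + 2) * (1 - q^4*x^2*u)"
    "qpoch q (Suc t + t + 2) = qpoch q (t + t + 2) * (1 - q^3*x^2)"
    "qpoch q (Suc t + Suc t + 2) = qpoch q (Suc t + t + 2) * (1 - q^4*x^2)"
    by (rule qpoch_SucI; simp add: x_def u_def N eval_nat_numeral power_add mult_ac)+
  have poch1: "qpoch q (Suc t - t) = 1 - q" "qpoch q (t + 1 - t) = 1 - q" "qpoch q (Suc t - Suc t) = 1"
    by (simp_all add: qpoch_Suc)
  have nz: "1 - q \<noteq> 0" "1 - q^3*x^2 \<noteq> 0" "1 - q^4*x^2 \<noteq> 0"
    using qpoch_nonzero[of "Suc t - t"] qpoch_nonzero[of "Suc t + Suc t + 2"]
    unfolding poch poch1 by auto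
  have "seed_alpha N t * bailey_kernel (Suc t) t
      = \<Psi> * (1 - q*x)^2 * (1 - q^2*x^2) * (1 - q*u) / ((1 - q) * (1 - q^3*x^2))"
    unfolding seed_alpha_def bailey_kernel_def \<Psi>_def poch(1,4) poch1 pow pow2
    by (simp add: divide_inverse mult_ac)
  moreover have "seed_alpha N (Suc t) * bailey_kernel (Suc t) (Suc t)
      = \<Psi> * (1 - q^2*x)^2 * (1 - q^4*x^2*u) / (q^2 * (1 - q^3*x^2))"
    unfolding seed_alpha_def bailey_kernel_def \<Psi>_def poch(3,4,5) poch1 pow pow2
    using nz(3) by (simp add: divide_inverse mult_ac)
  moreover have "seed_alpha N t * bailey_kernel t t = \<Psi> * (1 - q*x)^2 * (1 - q^2*x^2) * (1 - q*u)"
    unfolding seed_alpha_def bailey_kernel_def \<Psi>_def poch(1) pow pow2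
    by (simp add: divide_inverse mult_ac)
  moreover have "seed_certificate N t t
      = -(\<Psi> * q^2 * (1 - x)^2 * (1 - q*x)^2 * (1 - q*u) * (1 - q^2*u) / (1 - q))"
    unfolding seed_certificate_def \<Psi>_def poch(1,2) poch1 pow
    by (simp add: divide_inverse mult_ac)
  ultimately show ?thesis
    unfolding pow by (simp only: seed_last_identity[OF nz(1,2) q_nonzero])
qed

lemma seed_beta_Suc:
  assumes "t < N"
  shows "q^2 * (1 - q ^ (t + 1))^2 * (1 - q ^ (N - t)) * seed_beta N (Suc t)
       = (1 - q ^ (N - t + 2)) * seed_beta N t"
proof -
  have "N - Suc t + 1 = N - t" "N - Suc t + 2 = N - t + 1"
    "q ^ (2 * Suc t) = q ^ (2*t) * q^2" "qpoch q (Suc t) = qpoch q t * (1 - q ^ (t + 1))"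
    using assms by (simp_all add: qpoch_Suc power2_eq_square)
  then have beta_Suc: "seed_beta N (Suc t)
      = 1 / (q ^ (2*t) * q^2 * (qpoch q t * (1 - q ^ (t + 1)))^2
             * (1 - q ^ (N - t)) * (1 - q ^ (N - t + 1)))"
    unfolding seed_beta_def by (simp only:)
  moreover have "1 - q ^ (t + 1) \<noteq> 0" "1 - q ^ (N - t) \<noteq> 0" "1 - q ^ (N - t + 2) \<noteq> 0"
    by (rule one_minus_power_nonzero; simp add: assms)+
  ultimately show ?thesis
    unfolding beta_Suc seed_beta_def[of N t] using q_nonzero by (simp add: power_mult_distrib)
qed

lemma seed_pair_0: "seed_alpha N 0 * bailey_kernel 0 0 = seed_beta N 0"
proof -
  have "qpoch q (0 + 0 + 2) = (1 - q) * (1 - q^2)"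
    by (simp add: qpoch_Suc power2_eq_square)
  moreover have "qpoch q (N + 2) = qpoch q N * (1 - q ^ (N + 1)) * (1 - q ^ (N + 2))"
    "qpoch q (N + 0 + 2) = qpoch q N * (1 - q ^ (N + 1)) * (1 - q ^ (N + 2))"
    by (simp_all add: qpoch_Suc del: power_Suc)
  moreover have "1 - q^2 \<noteq> 0" "1 - q ^ (N + 1) \<noteq> 0" "1 - q ^ (N + 2) \<noteq> 0"
    by (rule one_minus_power_nonzero; simp)+
  ultimately show ?thesis
    unfolding seed_alpha_def seed_beta_def bailey_kernel_def
    using one_minus_q_nonzero qpoch_nonzero[of N] by (simp add: power2_eq_square)
qed

lemma seed_pair: "t \<le> N \<Longrightarrow> (\<Sum>r\<le>t. seed_alpha N r * bailey_kernel t r) = seed_beta N t"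
proof (induction t)
  case 0
  show ?case by (simp add: seed_pair_0)
next
  case (Suc t)
  then have "t < N" by simp
  define D E where "D = q^2 * (1 - q ^ (t + 1))^2 * (1 - q ^ (N - t))" and "E = 1 - q ^ (N - t + 2)"
  let ?G = "seed_certificate N t"
  have "D * (\<Sum>r\<le>Suc t. seed_alpha N r * bailey_kernel (Suc t) r)
      = (\<Sum>r<t. D * (seed_alpha N r * bailey_kernel (Suc t) r))
        + D * (seed_alpha N t * bailey_kernel (Suc t) t + seed_alpha N (Suc t) * bailey_kernel (Suc t) (Suc t))"
    by (simp add: lessThan_Suc_atMost[symmetric] sum_distrib_left algebra_simps)
  also have "(\<Sum>r<t. D * (seed_alpha N r * bailey_kernel (Suc t) r))
      = (\<Sum>r<t. E * (seed_alpha N r * bailey_kernel t r) + (?G (Suc r) - ?G r))"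
    using \<open>t < N\<close> by (intro sum.cong refl) (simp add: D_def E_def seed_step[symmetric])
  also have "\<dots> = E * (\<Sum>r<t. seed_alpha N r * bailey_kernel t r) + ?G t"
    by (simp add: sum.distrib sum_distrib_left sum_lessThan_telescope)
  also have "D * (seed_alpha N t * bailey_kernel (Suc t) t + seed_alpha N (Suc t) * bailey_kernel (Suc t) (Suc t))
      = E * (seed_alpha N t * bailey_kernel t t) - ?G t"
    using seed_last[OF \<open>t < N\<close>] by (simp add: D_def E_def algebra_simps)
  finally have "D * (\<Sum>r\<le>Suc t. seed_alpha N r * bailey_kernel (Suc t) r)
      = E * (\<Sum>r\<le>t. seed_alpha N r * bailey_kernel t r)"
    by (simp add: lessThan_Suc_atMost[symmetric] algebra_simps)
  also have "\<dots> = E * seed_beta N t"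
    using Suc by simp
  also have "\<dots> = D * seed_beta N (Suc t)"
    using seed_beta_Suc[OF \<open>t < N\<close>] by (simp add: D_def E_def)
  finally show ?case
    using q_nonzero one_minus_power_nonzero[of "t + 1"] one_minus_power_nonzero[of "N - t"] \<open>t < N\<close>
    by (simp add: D_def)
qed

end

section \<open>Sums over chains\<close>

lemma chains_1: "chains 1 L = (\<lambda>s j. if j = 1 then s else 0) ` {..L}"
proof
  show "chains 1 L \<subseteq> (\<lambda>s j. if j = 1 then s else 0) ` {..L}"
  proof
    fix k assume k: "k \<in> chains 1 L"
    then have "k = (\<lambda>j. if j = 1 then k 1 else 0)" and "k 1 \<le> L"
      unfolding chains_def by auto
    then show "k \<in> (\<lambda>s j. if j = 1 then s else 0) ` {..L}" by blast
  qed
qed (auto simp: chains_def)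

lemma sum_chains_1: "(\<Sum>k\<in>chains 1 L. f k) = (\<Sum>s\<le>L. f (\<lambda>j. if j = 1 then s else 0))"
proof -
  have "inj_on (\<lambda>s j. if j = 1 then s else (0::nat)) {..L}"
    by (rule inj_onI) (drule fun_cong[where x = 1], simp)
  then show ?thesis
    unfolding chains_1 by (subst sum.reindex) (simp_all only: comp_def)
qed

lemma chains_Suc:
  assumes "1 \<le> m"
  shows "chains (Suc m) L = (\<lambda>(k, s). k(Suc m := s)) ` (SIGMA k:chains m L. {..k m})"
proof
  show "chains (Suc m) L \<subseteq> (\<lambda>(k, s). k(Suc m := s)) ` (SIGMA k:chains m L. {..k m})"
  proof
    fix k assume k: "k \<in> chains (Suc m) L"
    have "k(Suc m := 0) \<in> chains m L"
      using k unfolding chains_def by auto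
    moreover have "k (Suc m) \<le> k m"
      using k assms unfolding chains_def by (auto dest: bspec[where x = m])
    ultimately show "k \<in> (\<lambda>(k, s). k(Suc m := s)) ` (SIGMA k:chains m L. {..k m})"
      by (intro image_eqI[where x = "(k(Suc m := 0), k (Suc m))"]) auto
  qed
next
  show "(\<lambda>(k, s). k(Suc m := s)) ` (SIGMA k:chains m L. {..k m}) \<subseteq> chains (Suc m) L"
  proof clarify
    fix k s assume k: "k \<in> chains m L" and s: "s \<le> k m"
    have "k m \<le> L"
      using k assms unfolding chains_def by auto
    with k s show "k(Suc m := s) \<in> chains (Suc m) L"
      unfolding chains_def by (auto simp: less_Suc_eq)
  qed
qed

lemma finite_chains: "1 \<le> m \<Longrightarrow> finite (chains m L)"
proof (induction m rule: nat_induct_at_least)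
  case base
  show ?case
    using chains_1[of L] by simp
next
  case (Suc m)
  then show ?case by (simp add: chains_Suc)
qed

lemma sum_chains_Suc:
  assumes "1 \<le> m"
  shows "(\<Sum>k\<in>chains (Suc m) L. f k) = (\<Sum>k\<in>chains m L. \<Sum>s\<le>k m. f (k(Suc m := s)))"
proof -
  have "inj_on (\<lambda>(k, s). k(Suc m := s)) (SIGMA k:chains m L. {..k m})"
  proof (rule inj_onI, clarify)
    fix k s k' s' assume "k \<in> chains m L" "k' \<in> chains m L" and eq: "k(Suc m := s) = k'(Suc m := s')"
    then have "k (Suc m) = k' (Suc m)"
      unfolding chains_def by auto
    with eq show "k = k' \<and> s = s'"
      by (metis fun_upd_idem_iff fun_upd_same fun_upd_upd)
  qed
  then have "(\<Sum>k\<in>chains (Suc m) L. f k) = (\<Sum>(k, s)\<in>(SIGMA k:chains m L. {..k m}). f (k(Suc m := s)))"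
    unfolding chains_Suc[OF assms] by (simp add: sum.reindex case_prod_beta')
  also have "\<dots> = (\<Sum>k\<in>chains m L. \<Sum>s\<le>k m. f (k(Suc m := s)))"
    using finite_chains[OF assms] by (simp add: sum.Sigma)
  finally show ?thesis .
qed

context generic_q
begin

definition chain_weight :: "nat \<Rightarrow> nat \<Rightarrow> (nat \<Rightarrow> nat) \<Rightarrow> 'a" where
  "chain_weight m L k = q ^ (\<Sum>j=1..m. k j ^ 2 + 2 * k j)
     / (qpoch q (L - k 1) * (\<Prod>j=1..m-1. qpoch q (k j - k (Suc j))))"

lemma chain_weight_upd:
  assumes "1 \<le> m"
  shows "chain_weight (Suc m) L (k(Suc m := s))
       = chain_weight m L k * (q ^ (s^2 + 2*s) / qpoch q (k m - s))"
proof -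
  have "(\<Sum>j=1..Suc m. (k(Suc m := s)) j ^ 2 + 2 * (k(Suc m := s)) j)
      = (\<Sum>j=1..m. k j ^ 2 + 2 * k j) + (s^2 + 2*s)"
    by (simp add: sum.cl_ivl_Suc)
  moreover have "(\<Prod>j=1..Suc m - 1. qpoch q ((k(Suc m := s)) j - (k(Suc m := s)) (Suc j)))
      = (\<Prod>j=1..m-1. qpoch q (k j - k (Suc j))) * qpoch q (k m - s)"
  proof -
    obtain p where m: "m = Suc p"
      using assms by (cases m) auto
    have "(\<Prod>j=1..p. qpoch q ((k(Suc m := s)) j - (k(Suc m := s)) (Suc j)))
        = (\<Prod>j=1..p. qpoch q (k j - k (Suc j)))"
      using m by (intro prod.cong) auto
    then show ?thesis
      using m by simp
  qed
  moreover have "(k(Suc m := s)) 1 = k 1"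
    using assms by simp
  ultimately show ?thesis
    unfolding chain_weight_def by (simp add: power_add mult_ac)
qed

lemma sum_chains_bailey_transform:
  "1 \<le> m \<Longrightarrow> (\<Sum>k\<in>chains m L. chain_weight m L k * \<beta> (k m)) = (bailey_transform ^^ m) \<beta> L"
proof (induction m arbitrary: \<beta> rule: nat_induct_at_least)
  case base
  show ?case
    unfolding sum_chains_1 by (simp add: chain_weight_def bailey_transform_def)
next
  case (Suc m)
  have "(\<Sum>k\<in>chains (Suc m) L. chain_weight (Suc m) L k * \<beta> (k (Suc m)))
      = (\<Sum>k\<in>chains m L. chain_weight m L k * bailey_transform \<beta> (k m))"
    unfolding sum_chains_Suc[OF Suc.hyps] chain_weight_upd[OF Suc.hyps]
    by (simp add: bailey_transform_def sum_distrib_left mult_ac)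
  also have "\<dots> = (bailey_transform ^^ Suc m) \<beta> L"
    by (simp add: Suc.IH funpow_Suc_right del: funpow.simps)
  finally show ?case .
qed

theorem bailey_chain_identity:
  fixes m n :: nat
  assumes "m \<ge> 1"
  shows "(\<Sum>i=0..n. inverse (q ^ (2*i)) * q ^ (m * (i^2 + 2*i))
            * ((1 - q ^ (i+1))^3 * (1 + q ^ (i+1)))
              / ((1 - q) * (1 - q ^ (n+1)) * (1 - q ^ (n+2))))
       = (\<Sum>k\<in>chains m n. inverse (q ^ (2 * k m)) * q ^ (\<Sum>j=1..m. k j ^ 2 + 2 * k j)
            * (qpoch q n ^ 2 / (qpoch q (k m) ^ 2 * qpoch q (n - k 1)
                 * (\<Prod>j=1..m-1. qpoch q (k j - k (Suc j)))))
            * ((1 - q ^ (n+1)) * (1 - q ^ (n+2))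
                 / ((1 - q ^ (n - k m + 1)) * (1 - q ^ (n - k m + 2)))))"
proof -
  define C where "C = qpoch q n ^ 2 * (1 - q ^ (n+1)) * (1 - q ^ (n+2))"
  have lhs_term: "inverse (q ^ (2*i)) * q ^ (m * (i^2 + 2*i)) * ((1 - q ^ (i+1))^3 * (1 + q ^ (i+1)))
       / ((1 - q) * (1 - q ^ (n+1)) * (1 - q ^ (n+2)))
     = C * (q ^ (m * (i^2 + 2*i)) * seed_alpha n i * bailey_kernel n i)" for i
  proof -
    have "(1 - q ^ (i+1))^3 * (1 + q ^ (i+1)) = (1 - q ^ (i+1))^2 * (1 - q ^ (2*i + 2))"
      by (simp add: power_add power_even_eq eval_nat_numeral algebra_simps)
    moreover have "qpoch q (n + 2) = qpoch q n * (1 - q ^ (n+1)) * (1 - q ^ (n+2))"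
      by (simp add: qpoch_Suc del: power_Suc)
    moreover have "1 - q ^ (n+1) \<noteq> 0" "1 - q ^ (n+2) \<noteq> 0"
      by (rule one_minus_power_nonzero; simp)+
    ultimately show ?thesis
      using one_minus_q_nonzero qpoch_nonzero[of n] qpoch_nonzero[of "n - i"] qpoch_nonzero[of "n + i + 2"]
      unfolding C_def seed_alpha_def bailey_kernel_def
      by (simp add: divide_simps) (simp add: power2_eq_square mult_ac)
  qed
  have rhs_term: "inverse (q ^ (2 * k m)) * q ^ (\<Sum>j=1..m. k j ^ 2 + 2 * k j)
            * (qpoch q n ^ 2 / (qpoch q (k m) ^ 2 * qpoch q (n - k 1)
                 * (\<Prod>j=1..m-1. qpoch q (k j - k (Suc j)))))
            * ((1 - q ^ (n+1)) * (1 - q ^ (n+2))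
                 / ((1 - q ^ (n - k m + 1)) * (1 - q ^ (n - k m + 2))))
     = C * (chain_weight m n k * seed_beta n (k m))" for k
    unfolding C_def chain_weight_def seed_beta_def by (simp add: divide_inverse mult_ac)
  have "(\<Sum>i=0..n. inverse (q ^ (2*i)) * q ^ (m * (i^2 + 2*i))
            * ((1 - q ^ (i+1))^3 * (1 + q ^ (i+1))) / ((1 - q) * (1 - q ^ (n+1)) * (1 - q ^ (n+2))))
      = C * (\<Sum>i\<le>n. q ^ (m * (i^2 + 2*i)) * seed_alpha n i * bailey_kernel n i)"
    unfolding atLeast0AtMost lhs_term by (simp only: sum_distrib_left)
  also have "(\<Sum>i\<le>n. q ^ (m * (i^2 + 2*i)) * seed_alpha n i * bailey_kernel n i)
      = (bailey_transform ^^ m) (seed_beta n) n"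
    by (rule bailey_lemma_iterated[symmetric]) (simp add: seed_pair)
  also have "\<dots> = (\<Sum>k\<in>chains m n. chain_weight m n k * seed_beta n (k m))"
    by (rule sum_chains_bailey_transform[OF assms, symmetric])
  finally show ?thesis
    unfolding rhs_term by (simp only: sum_distrib_left)
qed

end

lemma qv_power: "qv ^ l = Fract ([:0, 1:] ^ l) 1"
  by (induction l) (simp_all add: qv_def One_fract_def)

interpretation qv: generic_q qv
proof
  show "qv \<noteq> 0"
    by (simp add: qv_def Zero_fract_def eq_fract)
next
  fix l :: nat
  assume "0 < l"
  then have "poly ([:0, 1:] ^ l) 0 = (0 :: rat)"
    by (simp add: poly_power power_0_left)
  then have "[:0, 1:] ^ l \<noteq> (1 :: rat poly)"
    by (metis poly_1 zero_neq_one)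
  then show "qv ^ l \<noteq> 1"
    by (simp add: qv_power One_fract_def eq_fract)
qed

theorem mainTheorem3:
  fixes m n :: nat
  assumes "m \<ge> 1"
  shows "(\<Sum>i=0..n. inverse (qv ^ (2*i)) * qv ^ (m * (i^2 + 2*i))
            * ((1 - qv ^ (i+1))^3 * (1 + qv ^ (i+1)))
              / ((1 - qv) * (1 - qv ^ (n+1)) * (1 - qv ^ (n+2))))
       = (\<Sum>k\<in>chains m n. inverse (qv ^ (2 * k m)) * qv ^ (\<Sum>j=1..m. k j ^ 2 + 2 * k j)
            * (qpoch qv n ^ 2 / (qpoch qv (k m) ^ 2 * qpoch qv (n - k 1)
                 * (\<Prod>j=1..m-1. qpoch qv (k j - k (Suc j)))))
            * ((1 - qv ^ (n+1)) * (1 - qv ^ (n+2))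
                 / ((1 - qv ^ (n - k m + 1)) * (1 - qv ^ (n - k m + 2)))))"
  using assms by (rule qv.bailey_chain_identity)

end
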